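(* Let $(X,\rho)$ be a symmetric quandle, $Y$ an $(X,\rho)$-set, $D$ an unoriented link diagram with an $(X,\rho)_Y$-coloring, and $v$ a crossing of $D$. As an element of $C_2(X)_Y/D^\rho_2(X)_Y$, the weight of $v$ does not depend on the choice of the specified region.
   Context: A quandle is a set $X$ with a binary operation $(x,y)\mapsto x^y$ such that $x^x=x$; for all $x,y$ there is a unique $z$ with $z^y=x$ (written $x^{y^{-1}}$); and $(x^y)^z=(x^z)^{(y^z)}$. A good involution is a map $\rho:X\to X$ with $\rho\circ\rho={\rm id}$, $\rho(x^y)=\rho(x)^y$, $x^{\rho(y)}=x^{y^{-1}}$. The associated group $G_{(X,\rho)}$ has generators $X$ and relations $x^y=y^{-1}xy$, $\rho(x)=x^{-1}$; an $(X,\rho)$-set is a set $Y$ with a right action of $G_{(X,\rho)}$, written $y^x$. $C_2(X)_Y$ is the free abelian group on $Y\times X^2$, and $D^\rho_2(X)_Y$ is its subgroup generated by the elements $(y,x_1,x_2)+(y^{x_1},\rho(x_1),x_2)$ and $(y,x_1,x_2)+(y^{x_2},x_1^{x_2},\rho(x_2))$ for $y\in Y$, $x_1,x_2\in X$. For a diagram $D\subset\mathbb{R}^2$ of an unoriented link, semi-arcs are the arcs obtained by cutting the over-arcs at crossings. An $(X,\rho)_Y$-coloring assigns (up to basic inversions, which reverse the normal of a semi-arc and replace its label $x$ by $\rho(x)$) to each semi-arc a normal orientation and an element of $X$, and to each region an element of $Y$, such that at each crossing the two over semi-arcs labeled $x_1,x_2$ satisfy $x_1=x_2$ (coherent normals)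 or $x_1=\rho(x_2)$ (otherwise); if the under semi-arcs $e_1,e_2$ are labeled $x_1,x_2$ and an over semi-arc labeled $x_3$ has normal pointing from $e_1$ to $e_2$, then $x_1^{x_3}=x_2$ (coherent normals of $e_1,e_2$) or $x_1^{x_3}=\rho(x_2)$ (otherwise); and a semi-arc labeled $x$ with normal pointing from a region labeled $y_1$ to a region labeled $y_2$ satisfies $y_1^x=y_2$. Weight of a crossing $v$ with respect to a specified region $f$ (one of the regions around $v$) labeled $y$: let the under semi-arc $e_1$ and over semi-arc $e_2$ at $v$ facing $f$ have (after basic inversions) normals $n_1,n_2$ pointing away from $f$ and labels $x_1,x_2$; with $\epsilon=+1$ if $(n_2,n_1)$ is a positive basis of $\mathbb{R}^2$ and $-1$ otherwise, the weight is $\epsilon(y,x_1,x_2)$. *)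

theory Defs
  imports Main "HOL-Library.Poly_Mapping"
begin

text \<open>A quandle on the type 'x, with operation q x y standing for x^y.\<close>
definition quandle :: "('x \<Rightarrow> 'x \<Rightarrow> 'x) \<Rightarrow> bool" where
  "quandle q \<longleftrightarrow>
     (\<forall>x. q x x = x) \<and>
     (\<forall>x y. \<exists>!z. q z y = x) \<and>
     (\<forall>x y z. q (q x y) z = q (q x z) (q y z))"

definition qinv :: "('x \<Rightarrow> 'x \<Rightarrow> 'x) \<Rightarrow> 'x \<Rightarrow> 'x \<Rightarrow> 'x" where
  "qinv q x y = (THE z. q z y = x)"

definition good_involution :: "('x \<Rightarrow> 'x \<Rightarrow> 'x) \<Rightarrow> ('x \<Rightarrow> 'x) \<Rightarrow> bool" where
  "good_involution q \<rho> \<longleftrightarrow>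
     (\<forall>x. \<rho> (\<rho> x) = x) \<and>
     (\<forall>x y. \<rho> (q x y) = q (\<rho> x) y) \<and>
     (\<forall>x y. q x (\<rho> y) = qinv q x y)"

definition symmetric_quandle :: "('x \<Rightarrow> 'x \<Rightarrow> 'x) \<Rightarrow> ('x \<Rightarrow> 'x) \<Rightarrow> bool" where
  "symmetric_quandle q \<rho> \<longleftrightarrow> quandle q \<and> good_involution q \<rho>"

text \<open>An (X,rho)-set: a right action of the group G_(X,rho) = < X | x^y = y^-1 x y, rho(x) = x^-1 >
  on the type 'y, given (by the universal property of the presentation) by the actions
  act y x = y^x of the generators: each generator acts bijectively, and the defining
  relations hold, i.e. y^(rho x) = y^(x^-1) and y^(x1^x2) = ((y^(x2^-1))^x1)^x2.\<close>
definition XY_set :: "('x \<Rightarrow> 'x \<Rightarrow> 'x) \<Rightarrow> ('x \<Rightarrow> 'x) \<Rightarrow> ('y \<Rightarrow> 'x \<Rightarrow> 'y) \<Rightarrow> bool" where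
  "XY_set q \<rho> act \<longleftrightarrow>
     (\<forall>x. bij (\<lambda>y. act y x)) \<and>
     (\<forall>x y. act (act y x) (\<rho> x) = y) \<and>
     (\<forall>x1 x2 y. act y (q x1 x2) = act (act (inv (\<lambda>y'. act y' x2) y) x1) x2)"

text \<open>The free abelian group C_2(X)_Y on Y x X x X, and its subgroup D^rho_2(X)_Y.\<close>
type_synonym ('y, 'x) C2 = "('y \<times> 'x \<times> 'x) \<Rightarrow>\<^sub>0 int"

definition gen :: "'y \<Rightarrow> 'x \<Rightarrow> 'x \<Rightarrow> ('y, 'x) C2" where
  "gen y x1 x2 = Poly_Mapping.single (y, x1, x2) 1"

definition D_gens :: "('x \<Rightarrow> 'x \<Rightarrow> 'x) \<Rightarrow> ('x \<Rightarrow> 'x) \<Rightarrow> ('y \<Rightarrow> 'x \<Rightarrow> 'y) \<Rightarrow> ('y, 'x) C2 set" where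
  "D_gens q \<rho> act =
     {gen y x1 x2 + gen (act y x1) (\<rho> x1) x2 | y x1 x2. True} \<union>
     {gen y x1 x2 + gen (act y x2) (q x1 x2) (\<rho> x2) | y x1 x2. True}"

inductive_set D2rho :: "('x \<Rightarrow> 'x \<Rightarrow> 'x) \<Rightarrow> ('x \<Rightarrow> 'x) \<Rightarrow> ('y \<Rightarrow> 'x \<Rightarrow> 'y) \<Rightarrow> ('y, 'x) C2 set"
  for q \<rho> act where
  zero: "0 \<in> D2rho q \<rho> act"
| add: "a \<in> D2rho q \<rho> act \<Longrightarrow> g \<in> D_gens q \<rho> act \<Longrightarrow> a + g \<in> D2rho q \<rho> act"
| sub: "a \<in> D2rho q \<rho> act \<Longrightarrow> g \<in> D_gens q \<rho> act \<Longrightarrow> a - g \<in> D2rho q \<rho> act"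

text \<open>Local picture of a crossing v of the diagram, after an orientation-preserving
  change of coordinates: v is the origin, the under arc runs along the x-axis and the
  over arc along the y-axis.  Semi-arcs at v: uL (under, x<0), uR (under, x>0),
  oB (over, y<0), oT (over, y>0).  Regions around v: the four quadrants.
  up_uL = True means the normal of uL points in direction (0,1) (else (0,-1));
  right_oB = True means the normal of oB points in direction (1,0) (else (-1,0)).\<close>
datatype quadrant = NE | NW | SW | SE

record ('x, 'y) crossing =
  lab_uL :: 'x
  lab_uR :: 'x
  lab_oB :: 'x
  lab_oT :: 'x
  up_uL :: bool
  up_uR :: bool
  right_oB :: bool
  right_oT :: bool
  reg :: "quadrant \<Rightarrow> 'y"

definition colored_crossing ::
  "('x \<Rightarrow> 'x \<Rightarrow> 'x) \<Rightarrow> ('x \<Rightarrow> 'x) \<Rightarrow> ('y \<Rightarrow> 'x \<Rightarrow> 'y) \<Rightarrow> ('x, 'y) crossing \<Rightarrow> bool" where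
  "colored_crossing q \<rho> act c \<longleftrightarrow>
     \<comment> \<open>over semi-arcs\<close>
     (lab_oB c = (if right_oB c = right_oT c then lab_oT c else \<rho> (lab_oT c))) \<and>
     \<comment> \<open>under semi-arcs, for each over semi-arc s; its normal points from e1 to e2\<close>
     (\<forall>(x3, r) \<in> {(lab_oB c, right_oB c), (lab_oT c, right_oT c)}.
        (let (x1, x2) = (if r then (lab_uL c, lab_uR c) else (lab_uR c, lab_uL c))
         in q x1 x3 = (if up_uL c = up_uR c then x2 else \<rho> x2))) \<and>
     \<comment> \<open>regions: uL separates NW (above) and SW (below), uR separates NE and SE,
         oB separates SW (left) and SE (right), oT separates NW and NE\<close>
     (if up_uL c then act (reg c SW) (lab_uL c) = reg c NW
                 else act (reg c NW) (lab_uL c) = reg c SW) \<and>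
     (if up_uR c then act (reg c SE) (lab_uR c) = reg c NE
                 else act (reg c NE) (lab_uR c) = reg c SE) \<and>
     (if right_oB c then act (reg c SW) (lab_oB c) = reg c SE
                    else act (reg c SE) (lab_oB c) = reg c SW) \<and>
     (if right_oT c then act (reg c NW) (lab_oT c) = reg c NE
                    else act (reg c NE) (lab_oT c) = reg c NW)"

text \<open>Label of a semi-arc after a basic inversion making its normal equal to the
  wanted direction (ok = current normal already is the wanted one).\<close>
definition normalize :: "('x \<Rightarrow> 'x) \<Rightarrow> bool \<Rightarrow> 'x \<Rightarrow> 'x" where
  "normalize \<rho> ok x = (if ok then x else \<rho> x)"

text \<open>Under/over semi-arcs
  facing f and normals pointing away from f:
   NE: uR, normal (0,-1); oT, normal (-1,0); det(n2,n1) = +1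
   NW: uL, normal (0,-1); oT, normal (1,0);  det(n2,n1) = -1
   SW: uL, normal (0,1);  oB, normal (1,0);  det(n2,n1) = +1
   SE: uR, normal (0,1);  oB, normal (-1,0); det(n2,n1) = -1\<close>
definition weight :: "('x \<Rightarrow> 'x) \<Rightarrow> ('x, 'y) crossing \<Rightarrow> quadrant \<Rightarrow> ('y, 'x) C2" where
  "weight \<rho> c f = (case f of
      NE \<Rightarrow>   gen (reg c NE) (normalize \<rho> (\<not> up_uR c) (lab_uR c)) (normalize \<rho> (\<not> right_oT c) (lab_oT c))
    | NW \<Rightarrow> - gen (reg c NW) (normalize \<rho> (\<not> up_uL c) (lab_uL c)) (normalize \<rho> (right_oT c) (lab_oT c))
    | SW \<Rightarrow>   gen (reg c SW) (normalize \<rho> (up_uL c) (lab_uL c)) (normalize \<rho> (right_oB c) (lab_oB c))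
    | SE \<Rightarrow> - gen (reg c SE) (normalize \<rho> (up_uR c) (lab_uR c)) (normalize \<rho> (\<not> right_oB c) (lab_oB c)))"

definition eq_mod_D ::
  "('x \<Rightarrow> 'x \<Rightarrow> 'x) \<Rightarrow> ('x \<Rightarrow> 'x) \<Rightarrow> ('y \<Rightarrow> 'x \<Rightarrow> 'y) \<Rightarrow> ('y, 'x) C2 \<Rightarrow> ('y, 'x) C2 \<Rightarrow> bool" where
  "eq_mod_D q \<rho> act a b \<longleftrightarrow> a - b \<in> D2rho q \<rho> act"

end

theory Submission
  imports Defs
begin

text \<open>Normalise all normals at the crossing so that they agree with those facing the south-west
  region, labelled y, with under label a and over label b.  The coloring conditions then say that
  the other regions are labelled y^a, y^b, (y^a)^b and the right under arc carries a^b, so the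
  four weights are, up to sign, (y,a,b), (y^a,\<rho> a,b), (y^b,a^b,\<rho> b) and ((y^a)^b,\<rho>(a^b),\<rho> b).
  Consecutive weights around the crossing then differ exactly by generators of D^\<rho>_2(X)_Y.\<close>

lemma D_gens_subset_D2rho: "D_gens q \<rho> act \<subseteq> D2rho q \<rho> act"
  using D2rho.add[OF D2rho.zero] by auto

lemma D2rho_add:
  assumes "a \<in> D2rho q \<rho> act" and "b \<in> D2rho q \<rho> act"
  shows "a + b \<in> D2rho q \<rho> act"
  using assms(2)
proof (induction b rule: D2rho.induct)
  case zero
  then show ?case using assms(1) by simp
next
  case (add b g)
  then show ?case using D2rho.add[of "a + b" q \<rho> act g] by (simp add: add.assoc)
next
  case (sub b g)
  then show ?case using D2rho.sub[of "a + b" q \<rho> act g] by (simp add: add_diff_eq)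
qed

lemma D2rho_uminus:
  assumes "b \<in> D2rho q \<rho> act"
  shows "- b \<in> D2rho q \<rho> act"
  using assms
proof (induction b rule: D2rho.induct)
  case zero
  then show ?case by (simp add: D2rho.zero)
next
  case (add b g)
  then show ?case using D2rho.sub[OF add.IH add.hyps(2)] by (simp add: algebra_simps)
next
  case (sub b g)
  then show ?case using D2rho.add[OF sub.IH sub.hyps(2)] by (simp add: algebra_simps)
qed

lemma eq_mod_D_refl: "eq_mod_D q \<rho> act a a"
  by (simp add: eq_mod_D_def D2rho.zero)

lemma eq_mod_D_sym: "eq_mod_D q \<rho> act a b \<Longrightarrow> eq_mod_D q \<rho> act b a"
  unfolding eq_mod_D_def using D2rho_uminus by fastforce

lemma eq_mod_D_trans:
  "eq_mod_D q \<rho> act a b \<Longrightarrow> eq_mod_D q \<rho> act b c \<Longrightarrow> eq_mod_D q \<rho> act a c"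
  unfolding eq_mod_D_def using D2rho_add by fastforce

lemma eq_mod_D_neg_gen_first:
  "eq_mod_D q \<rho> act (gen y x1 x2) (- gen (act y x1) (\<rho> x1) x2)"
  using D_gens_subset_D2rho by (fastforce simp: eq_mod_D_def D_gens_def)

lemma eq_mod_D_neg_gen_second:
  "eq_mod_D q \<rho> act (gen y x1 x2) (- gen (act y x2) (q x1 x2) (\<rho> x2))"
  using D_gens_subset_D2rho by (fastforce simp: eq_mod_D_def D_gens_def)

lemma quandle_q_eq_iff:
  assumes "quandle q"
  shows "q z y = x \<longleftrightarrow> z = qinv q x y"
proof -
  from assms have unique: "\<exists>!z. q z y = x" by (simp add: quandle_def)
  show ?thesis
  proof
    assume "q z y = x"
    then show "z = qinv q x y"
      unfolding qinv_def using unique by (simp add: the1_equality)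
  next
    assume "z = qinv q x y"
    then show "q z y = x"
      unfolding qinv_def using theI'[OF unique] by simp
  qed
qed

lemma symmetric_quandle_q_rho_eq_iff:
  assumes "symmetric_quandle q \<rho>"
  shows "q x (\<rho> y) = z \<longleftrightarrow> x = q z y"
proof -
  from assms have "quandle q" and "q x (\<rho> y) = qinv q x y"
    by (simp_all add: symmetric_quandle_def good_involution_def)
  then show ?thesis using quandle_q_eq_iff[of q z y x] by auto
qed

lemma normalize_Not:
  assumes "\<And>x. \<rho> (\<rho> x) = x"
  shows "normalize \<rho> (\<not> p) x = \<rho> (normalize \<rho> p x)"
  by (simp add: normalize_def assms)

lemma XY_set_act_normalize:
  assumes "XY_set q \<rho> act"
    and "if p then act y x = y' else act y' x = y"
  shows "y' = act y (normalize \<rho> p x)"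
  using assms by (cases p) (auto simp: normalize_def XY_set_def)

lemma colored_crossing_over_label:
  assumes "good_involution q \<rho>" and "colored_crossing q \<rho> act c"
  shows "normalize \<rho> (right_oT c) (lab_oT c) = normalize \<rho> (right_oB c) (lab_oB c)"
  using assms
  by (cases "right_oB c"; cases "right_oT c")
     (simp_all add: colored_crossing_def normalize_def good_involution_def)

lemma colored_crossing_under_label:
  assumes "symmetric_quandle q \<rho>" and "colored_crossing q \<rho> act c"
  shows "q (normalize \<rho> (up_uL c) (lab_uL c)) (normalize \<rho> (right_oB c) (lab_oB c))
           = normalize \<rho> (up_uR c) (lab_uR c)"
proof -
  have rr: "\<And>x. \<rho> (\<rho> x) = x" and rq: "\<And>x y. \<rho> (q x y) = q (\<rho> x) y"
    using assms(1) by (auto simp: symmetric_quandle_def good_involution_def)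
  have under: "q (if right_oB c then lab_uL c else lab_uR c) (lab_oB c) =
     (if up_uL c = up_uR c then (if right_oB c then lab_uR c else lab_uL c)
      else \<rho> (if right_oB c then lab_uR c else lab_uL c))"
    using assms(2) by (cases "right_oB c") (auto simp: colored_crossing_def Let_def)
  show ?thesis
  proof (cases "right_oB c")
    case True
    with under show ?thesis unfolding normalize_def
      by (cases "up_uL c"; cases "up_uR c") (simp_all; metis rr rq)+
  next
    case False
    with under have "normalize \<rho> (up_uL c) (lab_uL c) = q (normalize \<rho> (up_uR c) (lab_uR c)) (lab_oB c)"
      unfolding normalize_def by (cases "up_uL c"; cases "up_uR c") (simp_all; metis rr rq)+
    with False show ?thesis
      using symmetric_quandle_q_rho_eq_iff[OF assms(1)] by (simp add: normalize_def)
  qed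
qed

lemma colored_crossing_regions:
  assumes "symmetric_quandle q \<rho>" and "XY_set q \<rho> act" and "colored_crossing q \<rho> act c"
  defines "y \<equiv> reg c SW"
    and "a \<equiv> normalize \<rho> (up_uL c) (lab_uL c)"
    and "b \<equiv> normalize \<rho> (right_oB c) (lab_oB c)"
  shows "reg c NW = act y a" and "reg c SE = act y b" and "reg c NE = act (act y a) b"
proof -
  note crossing = assms(3)[unfolded colored_crossing_def]
  show NW: "reg c NW = act y a"
    using XY_set_act_normalize[OF assms(2)] crossing unfolding y_def a_def by blast
  show "reg c SE = act y b"
    using XY_set_act_normalize[OF assms(2)] crossing unfolding y_def b_def by blast
  have "reg c NE = act (reg c NW) (normalize \<rho> (right_oT c) (lab_oT c))"
    using XY_set_act_normalize[OF assms(2)] crossing by blast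
  moreover have "normalize \<rho> (right_oT c) (lab_oT c) = b"
    using colored_crossing_over_label assms(1,3) unfolding b_def symmetric_quandle_def by blast
  ultimately show "reg c NE = act (act y a) b"
    using NW by simp
qed

lemma colored_crossing_weights:
  assumes "symmetric_quandle q \<rho>" and "XY_set q \<rho> act" and "colored_crossing q \<rho> act c"
  defines "y \<equiv> reg c SW"
    and "a \<equiv> normalize \<rho> (up_uL c) (lab_uL c)"
    and "b \<equiv> normalize \<rho> (right_oB c) (lab_oB c)"
  shows "weight \<rho> c SW = gen y a b"
    and "weight \<rho> c NW = - gen (act y a) (\<rho> a) b"
    and "weight \<rho> c SE = - gen (act y b) (q a b) (\<rho> b)"
    and "weight \<rho> c NE = gen (act (act y a) b) (\<rho> (q a b)) (\<rho> b)"
proof -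
  from assms(1) have good: "good_involution q \<rho>" and rr: "\<And>x. \<rho> (\<rho> x) = x"
    by (simp_all add: symmetric_quandle_def good_involution_def)
  note over = colored_crossing_over_label[OF good assms(3)]
    and under = colored_crossing_under_label[OF assms(1,3)]
    and regions = colored_crossing_regions[OF assms(1-3)]
    and inv = normalize_Not[OF rr]
  show "weight \<rho> c SW = gen y a b"
    unfolding y_def a_def b_def by (simp add: weight_def)
  show "weight \<rho> c NW = - gen (act y a) (\<rho> a) b"
    unfolding y_def a_def b_def by (simp add: weight_def regions inv over)
  show "weight \<rho> c SE = - gen (act y b) (q a b) (\<rho> b)"
    unfolding y_def a_def b_def by (simp add: weight_def regions inv under)
  show "weight \<rho> c NE = gen (act (act y a) b) (\<rho> (q a b)) (\<rho> b)"
    unfolding y_def a_def b_def by (simp add: weight_def regions inv under over)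
qed

lemma colored_crossing_adjacent_weights:
  assumes "symmetric_quandle q \<rho>" and "XY_set q \<rho> act" and "colored_crossing q \<rho> act c"
  shows "eq_mod_D q \<rho> act (weight \<rho> c SW) (weight \<rho> c NW)"
    and "eq_mod_D q \<rho> act (weight \<rho> c SW) (weight \<rho> c SE)"
    and "eq_mod_D q \<rho> act (weight \<rho> c NE) (weight \<rho> c NW)"
proof -
  obtain y a b where
    SW: "weight \<rho> c SW = gen y a b" and
    NW: "weight \<rho> c NW = - gen (act y a) (\<rho> a) b" and
    SE: "weight \<rho> c SE = - gen (act y b) (q a b) (\<rho> b)" and
    NE: "weight \<rho> c NE = gen (act (act y a) b) (\<rho> (q a b)) (\<rho> b)"
    using colored_crossing_weights[OF assms] by blast
  have rq: "q (\<rho> a) b = \<rho> (q a b)"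
    using assms(1) by (simp add: symmetric_quandle_def good_involution_def)
  show "eq_mod_D q \<rho> act (weight \<rho> c SW) (weight \<rho> c NW)"
    unfolding SW NW by (rule eq_mod_D_neg_gen_first)
  show "eq_mod_D q \<rho> act (weight \<rho> c SW) (weight \<rho> c SE)"
    unfolding SW SE by (rule eq_mod_D_neg_gen_second)
  show "eq_mod_D q \<rho> act (weight \<rho> c NE) (weight \<rho> c NW)"
    using eq_mod_D_neg_gen_second[of q \<rho> act "act y a" "\<rho> a" b]
    unfolding NW NE rq eq_mod_D_def by (simp add: add.commute)
qed

theorem lemma6p2:
  fixes q :: "'x \<Rightarrow> 'x \<Rightarrow> 'x" and \<rho> :: "'x \<Rightarrow> 'x"
    and act :: "'y \<Rightarrow> 'x \<Rightarrow> 'y" and c :: "('x, 'y) crossing"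
  assumes "symmetric_quandle q \<rho>"
    and "XY_set q \<rho> act"
    and "colored_crossing q \<rho> act c"
  shows "\<forall>f f'. eq_mod_D q \<rho> act (weight \<rho> c f) (weight \<rho> c f')"
proof -
  note SW_NW = colored_crossing_adjacent_weights(1)[OF assms]
    and SW_SE = colored_crossing_adjacent_weights(2)[OF assms]
    and NE_NW = colored_crossing_adjacent_weights(3)[OF assms]
  have to_SW: "eq_mod_D q \<rho> act (weight \<rho> c f) (weight \<rho> c SW)" for f
  proof (cases f)
    case NE
    then show ?thesis using eq_mod_D_trans[OF NE_NW eq_mod_D_sym[OF SW_NW]] by simp
  next
    case NW
    then show ?thesis using eq_mod_D_sym[OF SW_NW] by simp
  next
    case SW
    then show ?thesis by (simp add: eq_mod_D_refl)
  next
    case SE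
    then show ?thesis using eq_mod_D_sym[OF SW_SE] by simp
  qed
  show ?thesis
    using eq_mod_D_trans[OF to_SW eq_mod_D_sym[OF to_SW]] by blast
qed

end
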